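(* Let $1\to N\to\Gamma\to Q\to 1$ be an extension of finitely generated groups such that $N$ and $Q$ are infinite and $N$ is an acentral subgroup of $\Gamma$. Then $\Gamma$ is not presentable by a product.
   Context: A subgroup $A$ of a group $\Gamma$ is called acentral if for every $g\in A\setminus\{1\}$ the centraliser $C_\Gamma(g)$ is contained in $A$. An infinite group $\Gamma$ is not presentable by a product if for every homomorphism $\varphi\colon \Gamma_1\times\Gamma_2\to\Gamma$ whose image has finite index in $\Gamma$, at least one of $\varphi(\Gamma_1)$, $\varphi(\Gamma_2)$ is finite. *)

theory Defs
  imports "HOL-Algebra.Algebra"
begin

definition fin_gen :: "('a, 'm) monoid_scheme \<Rightarrow> bool" where
  "fin_gen G \<longleftrightarrow> (\<exists>S. finite S \<and> S \<subseteq> carrier G \<and> generate G S = carrier G)"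

definition centraliser :: "('a, 'm) monoid_scheme \<Rightarrow> 'a \<Rightarrow> 'a set" where
  "centraliser G g = {h \<in> carrier G. h \<otimes>\<^bsub>G\<^esub> g = g \<otimes>\<^bsub>G\<^esub> h}"

definition acentral :: "('a, 'm) monoid_scheme \<Rightarrow> 'a set \<Rightarrow> bool" where
  "acentral G A \<longleftrightarrow> subgroup A G \<and>
     (\<forall>g \<in> A - {\<one>\<^bsub>G\<^esub>}. centraliser G g \<subseteq> A)"

text \<open>Not presentable by a product, with the factor groups ranging over all groups
  carried by the types 'b and 'c (type variables are universally quantified at theorem level).\<close>
definition not_presentable_by_product ::
  "('a, 'm) monoid_scheme \<Rightarrow> 'b itself \<Rightarrow> 'c itself \<Rightarrow> bool" where
  "not_presentable_by_product G _ _ \<longleftrightarrow> infinite (carrier G) \<and>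
    (\<forall>(G1 :: 'b monoid) (G2 :: 'c monoid) \<phi>.
        group G1 \<longrightarrow> group G2 \<longrightarrow> \<phi> \<in> hom (G1 \<times>\<times> G2) G \<longrightarrow>
        finite (rcosets\<^bsub>G\<^esub> (\<phi> ` carrier (G1 \<times>\<times> G2))) \<longrightarrow>
        finite (\<phi> ` (carrier G1 \<times> {\<one>\<^bsub>G2\<^esub>})) \<or> finite (\<phi> ` ({\<one>\<^bsub>G1\<^esub>} \<times> carrier G2)))"

end

theory Submission
  imports Defs
begin

text \<open>Let \<open>A\<close> be the infinite, normal, acentral image of \<open>N\<close>, and let the product map
  have finite-index image \<open>P = K L\<close>, where \<open>K\<close> and \<open>L\<close> are the commuting images of the two
  factors. As \<open>A\<close> is infinite and \<open>P\<close> has finite index, \<open>A\<close> meets \<open>P\<close> in some \<open>a = k l \<noteq> 1\<close>.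
  If \<open>L \<inter> A = 1\<close>, then for \<open>u \<in> L\<close> the commutator \<open>[a, u] = [l, u]\<close> lies in \<open>L \<inter> A\<close>, so \<open>u\<close>
  centralises \<open>a\<close>, hence lies in \<open>A\<close>, hence is trivial; symmetrically for \<open>K\<close>. Otherwise \<open>K\<close> and
  \<open>L\<close> each centralise a nontrivial element of \<open>A\<close>, so \<open>P \<subseteq> A\<close>, and then \<open>Q \<cong> \<Gamma>/A\<close> is finite.\<close>

lemma acentral_commuting_mem:
  assumes "acentral G A" "a \<in> A" "a \<noteq> \<one>\<^bsub>G\<^esub>" "h \<in> carrier G" "h \<otimes>\<^bsub>G\<^esub> a = a \<otimes>\<^bsub>G\<^esub> h"
  shows "h \<in> A"
  using assms unfolding acentral_def centraliser_def by blast

lemma (in group) infinite_subgroup_meets_finite_index_subgroup: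
  assumes "subgroup A G" "infinite A" "subgroup H G" "finite (rcosets H)"
  obtains a where "a \<in> A" "a \<in> H" "a \<noteq> \<one>"
proof -
  have "inj_on (\<lambda>a. H #> a) A" if trivial: "A \<inter> H \<subseteq> {\<one>}"
  proof (rule inj_onI)
    fix a b assume a: "a \<in> A" and b: "b \<in> A" and eq: "H #> a = H #> b"
    have "a \<in> H #> b"
      using eq rcos_self[of a H] subgroup.mem_carrier[OF assms(1) a] assms(3) by simp
    then have "a \<otimes> inv b \<in> H"
      using subgroup.rcos_module_imp[OF assms(3) is_group] subgroup.mem_carrier[OF assms(1) b] by blast
    moreover have "a \<otimes> inv b \<in> A"
      using a b assms(1) by (simp add: subgroup.m_closed subgroup.m_inv_closed)
    ultimately have "a \<otimes> inv b = \<one>" using trivial by blast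
    then show "a = b"
      using subgroup.mem_carrier[OF assms(1)] a b by (metis inv_solve_right' one_closed l_one)
  qed
  moreover have "(\<lambda>a. H #> a) ` A \<subseteq> rcosets H"
    using subgroup.subset[OF assms(1)] unfolding RCOSETS_def by blast
  ultimately show thesis
    using assms(2,4) that finite_imageD finite_subset by blast
qed

lemma (in group_hom) finite_image_if_finite_index_in_kernel:
  assumes "subgroup K G" "K \<subseteq> kernel G H h" "finite (rcosets K)"
  shows "finite (h ` carrier G)"
proof -
  have coset_image: "h ` (K #> g) = {h g}" if "g \<in> carrier G" for g
    using that assms(1,2) subgroup.one_closed[OF assms(1)]
    by (force simp: r_coset_def kernel_def)
  have "h ` carrier G \<subseteq> (\<Union>C \<in> rcosets K. h ` C)"
    using G.rcos_self[OF _ assms(1)] unfolding RCOSETS_def by blast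
  moreover have "finite (h ` C)" if "C \<in> rcosets K" for C
    using that coset_image unfolding RCOSETS_def by auto
  ultimately show ?thesis
    using assms(3) by (meson finite_UN_I finite_subset)
qed

lemma (in group) commutator_eq_one_imp_commute:
  assumes "x \<in> carrier G" "y \<in> carrier G" "x \<otimes> y \<otimes> inv x \<otimes> inv y = \<one>"
  shows "y \<otimes> x = x \<otimes> y"
proof -
  have "y \<otimes> x = (x \<otimes> y \<otimes> inv x \<otimes> inv y) \<otimes> (y \<otimes> x)"
    using assms by simp
  also have "\<dots> = x \<otimes> y \<otimes> inv x \<otimes> (inv y \<otimes> y) \<otimes> x"
    using assms(1,2) by (simp only: m_assoc m_closed inv_closed)
  also have "\<dots> = x \<otimes> y"
    using assms(1,2) by (simp add: m_assoc)
  finally show ?thesis .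
qed

lemma (in group) commuting_factor_trivial_if_meets_acentral_trivially:
  assumes "A \<lhd> G" "acentral G A" "subgroup K G" "subgroup L G"
    and commute: "\<And>k l. k \<in> K \<Longrightarrow> l \<in> L \<Longrightarrow> k \<otimes> l = l \<otimes> k"
    and "k \<in> K" "l \<in> L" "k \<otimes> l \<in> A" "k \<otimes> l \<noteq> \<one>"
    and disjoint: "L \<inter> A \<subseteq> {\<one>}"
  shows "L = {\<one>}"
proof -
  interpret A: normal A G by fact
  interpret L: subgroup L G by fact
  define a where "a = k \<otimes> l"
  have kc: "k \<in> carrier G" and lc: "l \<in> carrier G" and ac: "a \<in> carrier G"
    using assms(6,7) subgroup.mem_carrier[OF assms(3)] unfolding a_def by auto
  have aA: "a \<in> A" and a1: "a \<noteq> \<one>" using assms(8,9) unfolding a_def .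
  have "u = \<one>" if u: "u \<in> L" for u
  proof -
    have uc: "u \<in> carrier G" using u by (rule L.mem_carrier)
    have "l \<otimes> u \<otimes> inv l \<in> L" using u assms(7) by (simp add: L.m_closed L.m_inv_closed)
    then have "k \<otimes> (l \<otimes> u \<otimes> inv l) = (l \<otimes> u \<otimes> inv l) \<otimes> k"
      by (rule commute[OF assms(6)])
    then have "k \<otimes> (l \<otimes> u \<otimes> inv l) \<otimes> inv k = l \<otimes> u \<otimes> inv l"
      using kc lc uc by (simp add: m_assoc)
    then have conj: "a \<otimes> u \<otimes> inv a = l \<otimes> u \<otimes> inv l"
      unfolding a_def using kc lc uc by (simp add: m_assoc inv_mult_group)
    have "a \<otimes> u \<otimes> inv a \<otimes> inv u \<in> L"
      unfolding conj using u assms(7) by (simp add: L.m_closed L.m_inv_closed)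
    moreover have "a \<otimes> (u \<otimes> inv a \<otimes> inv u) \<in> A"
      using aA A.inv_op_closed2[OF uc A.m_inv_closed[OF aA]] by (rule A.m_closed)
    then have "a \<otimes> u \<otimes> inv a \<otimes> inv u \<in> A"
      using ac uc by (simp add: m_assoc)
    ultimately have "a \<otimes> u \<otimes> inv a \<otimes> inv u = \<one>"
      using disjoint by blast
    then have "u \<otimes> a = a \<otimes> u"
      by (rule commutator_eq_one_imp_commute[OF ac uc])
    then have "u \<in> A"
      by (rule acentral_commuting_mem[OF assms(2) aA a1 uc])
    then show "u = \<one>" using u disjoint by blast
  qed
  then show ?thesis using L.one_closed by blast
qed

lemma (in group) commuting_product_meeting_acentral_cases:
  assumes "A \<lhd> G" "acentral G A" "subgroup K G" "subgroup L G"
    and commute: "\<And>k l. k \<in> K \<Longrightarrow> l \<in> L \<Longrightarrow> k \<otimes> l = l \<otimes> k"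
    and "a \<in> K <#> L" "a \<in> A" "a \<noteq> \<one>"
  shows "K = {\<one>} \<or> L = {\<one>} \<or> K <#> L \<subseteq> A"
proof -
  obtain k l where k: "k \<in> K" and l: "l \<in> L" and a: "a = k \<otimes> l"
    using assms(6) unfolding set_mult_def by blast
  have factor_in_A: "M \<subseteq> A"
    if M: "subgroup M G" and "b \<in> A" "b \<noteq> \<one>" and "\<And>m. m \<in> M \<Longrightarrow> m \<otimes> b = b \<otimes> m" for M b
  proof
    fix m assume "m \<in> M"
    then show "m \<in> A"
      using acentral_commuting_mem[OF assms(2) that(2,3) subgroup.mem_carrier[OF M]] that(4) by blast
  qed
  consider "L \<inter> A \<subseteq> {\<one>}" | "K \<inter> A \<subseteq> {\<one>}"
    | b c where "b \<in> L" "b \<in> A" "b \<noteq> \<one>" "c \<in> K" "c \<in> A" "c \<noteq> \<one>"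
    by blast
  then show ?thesis
  proof cases
    case 1
    have "L = {\<one>}"
      by (rule commuting_factor_trivial_if_meets_acentral_trivially[OF assms(1-5) k l assms(7,8)[unfolded a] 1])
    then show ?thesis by blast
  next
    case 2
    have "l \<otimes> k = a" using commute[OF k l] a by simp
    then have "K = {\<one>}"
      using commuting_factor_trivial_if_meets_acentral_trivially[OF assms(1,2,4,3) commute[symmetric] l k]
        assms(7,8) 2 by simp
    then show ?thesis by blast
  next
    case 3
    have "K \<subseteq> A"
      using factor_in_A[OF assms(3) \<open>b \<in> A\<close> \<open>b \<noteq> \<one>\<close>] commute \<open>b \<in> L\<close> by blast
    moreover have "L \<subseteq> A"
      using factor_in_A[OF assms(4) \<open>c \<in> A\<close> \<open>c \<noteq> \<one>\<close>] commute[symmetric] \<open>c \<in> K\<close> by blast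
    ultimately have "K <#> L \<subseteq> A"
      using subgroup.m_closed[OF normal_imp_subgroup[OF assms(1)]] unfolding set_mult_def by blast
    then show ?thesis by blast
  qed
qed

context
  fixes G1 :: "('a, 'm1) monoid_scheme" and G2 :: "('b, 'm2) monoid_scheme"
    and G :: "('c, 'm) monoid_scheme" and \<phi> :: "'a \<times> 'b \<Rightarrow> 'c"
  assumes G1: "group G1" and G2: "group G2" and \<phi>: "group_hom (G1 \<times>\<times> G2) G \<phi>"
begin

lemma DirProd_hom_fst_image_subgroup:
  "subgroup (\<phi> ` (carrier G1 \<times> {\<one>\<^bsub>G2\<^esub>})) G"
  using group_hom.subgroup_img_is_subgroup[OF \<phi>]
    DirProd_subgroups[OF G1 group.subgroup_self[OF G1] G2 group.triv_subgroup[OF G2]]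
  by blast

lemma DirProd_hom_snd_image_subgroup:
  "subgroup (\<phi> ` ({\<one>\<^bsub>G1\<^esub>} \<times> carrier G2)) G"
  using group_hom.subgroup_img_is_subgroup[OF \<phi>]
    DirProd_subgroups[OF G1 group.triv_subgroup[OF G1] G2 group.subgroup_self[OF G2]]
  by blast

lemma DirProd_hom_image_split:
  assumes "x \<in> carrier G1" "y \<in> carrier G2"
  shows "\<phi> (x, y) = \<phi> (x, \<one>\<^bsub>G2\<^esub>) \<otimes>\<^bsub>G\<^esub> \<phi> (\<one>\<^bsub>G1\<^esub>, y)"
    and "\<phi> (x, y) = \<phi> (\<one>\<^bsub>G1\<^esub>, y) \<otimes>\<^bsub>G\<^esub> \<phi> (x, \<one>\<^bsub>G2\<^esub>)"
  using group_hom.hom_mult[OF \<phi>, of "(x, \<one>\<^bsub>G2\<^esub>)" "(\<one>\<^bsub>G1\<^esub>, y)"]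
    group_hom.hom_mult[OF \<phi>, of "(\<one>\<^bsub>G1\<^esub>, y)" "(x, \<one>\<^bsub>G2\<^esub>)"]
    assms G1 G2 by (simp_all add: group.is_monoid)

lemma DirProd_hom_factor_images_commute:
  assumes "k \<in> \<phi> ` (carrier G1 \<times> {\<one>\<^bsub>G2\<^esub>})" "l \<in> \<phi> ` ({\<one>\<^bsub>G1\<^esub>} \<times> carrier G2)"
  shows "k \<otimes>\<^bsub>G\<^esub> l = l \<otimes>\<^bsub>G\<^esub> k"
  using assms DirProd_hom_image_split by force

lemma DirProd_hom_image_subset_factor_product:
  "\<phi> ` carrier (G1 \<times>\<times> G2) \<subseteq> \<phi> ` (carrier G1 \<times> {\<one>\<^bsub>G2\<^esub>}) <#>\<^bsub>G\<^esub> \<phi> ` ({\<one>\<^bsub>G1\<^esub>} \<times> carrier G2)"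
  unfolding set_mult_def using DirProd_hom_image_split(1) by fastforce

end

lemma (in group_hom) DirProd_hom_factor_trivial_if_acentral_kernel:
  assumes acentral: "acentral G (kernel G H h)"
    and "infinite (kernel G H h)" "infinite (h ` carrier G)"
    and G1: "group G1" and G2: "group G2" and \<phi>: "\<phi> \<in> hom (G1 \<times>\<times> G2) G"
    and finite_index: "finite (rcosets (\<phi> ` carrier (G1 \<times>\<times> G2)))"
  shows "\<phi> ` (carrier G1 \<times> {\<one>\<^bsub>G2\<^esub>}) = {\<one>} \<or> \<phi> ` ({\<one>\<^bsub>G1\<^esub>} \<times> carrier G2) = {\<one>}"
proof -
  interpret \<phi>: group_hom "G1 \<times>\<times> G2" G \<phi>
    using G1 G2 \<phi> DirProd_group G.is_group by (simp add: group_hom_axioms_def group_hom_def)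
  define K where "K = \<phi> ` (carrier G1 \<times> {\<one>\<^bsub>G2\<^esub>})"
  define L where "L = \<phi> ` ({\<one>\<^bsub>G1\<^esub>} \<times> carrier G2)"
  define P where "P = \<phi> ` carrier (G1 \<times>\<times> G2)"
  have P_subset: "P \<subseteq> K <#> L"
    using DirProd_hom_image_subset_factor_product[OF G1 G2 \<phi>.group_hom_axioms]
    unfolding K_def L_def P_def .
  obtain a where "a \<in> kernel G H h" "a \<in> P" "a \<noteq> \<one>"
    using G.infinite_subgroup_meets_finite_index_subgroup[OF subgroup_kernel assms(2)
        \<phi>.img_is_subgroup finite_index] unfolding P_def by blast
  then have "K = {\<one>} \<or> L = {\<one>} \<or> K <#> L \<subseteq> kernel G H h"
    using G.commuting_product_meeting_acentral_cases[OF normal_kernel acentral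
        DirProd_hom_fst_image_subgroup[OF G1 G2 \<phi>.group_hom_axioms]
        DirProd_hom_snd_image_subgroup[OF G1 G2 \<phi>.group_hom_axioms]
        DirProd_hom_factor_images_commute[OF G1 G2 \<phi>.group_hom_axioms]] P_subset
    unfolding K_def L_def by blast
  moreover have "\<not> K <#> L \<subseteq> kernel G H h"
  proof
    assume "K <#> L \<subseteq> kernel G H h"
    then have "finite (h ` carrier G)"
      using finite_image_if_finite_index_in_kernel[OF \<phi>.img_is_subgroup _ finite_index] P_subset
      unfolding P_def by blast
    then show False using assms(3) by blast
  qed
  ultimately show ?thesis unfolding K_def L_def by blast
qed

theorem corollary3p3:
  fixes N :: "('n, 'x) monoid_scheme" and \<Gamma> :: "('g, 'y) monoid_scheme"
    and Q :: "('q, 'z) monoid_scheme"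
    and i :: "'n \<Rightarrow> 'g" and p :: "'g \<Rightarrow> 'q"
  assumes "group N" and "group \<Gamma>" and "group Q"
    and "i \<in> hom N \<Gamma>" and "inj_on i (carrier N)"
    and "p \<in> hom \<Gamma> Q" and "p ` carrier \<Gamma> = carrier Q"
    and "i ` carrier N = kernel \<Gamma> Q p"
    and "fin_gen N" and "fin_gen \<Gamma>" and "fin_gen Q"
    and "infinite (carrier N)" and "infinite (carrier Q)"
    and "acentral \<Gamma> (i ` carrier N)"
  shows "not_presentable_by_product \<Gamma> TYPE('b) TYPE('c)"
proof -
  interpret p: group_hom \<Gamma> Q p by (simp add: assms(2,3,6) group_hom_axioms_def group_hom_def)
  have kernel_infinite: "infinite (kernel \<Gamma> Q p)"
    using assms(5,8,12) finite_imageD by metis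
  have "infinite (carrier \<Gamma>)"
    using kernel_infinite p.subgroup_kernel finite_subset subgroup.subset by metis
  moreover have "finite (\<phi> ` (carrier G1 \<times> {\<one>\<^bsub>G2\<^esub>})) \<or> finite (\<phi> ` ({\<one>\<^bsub>G1\<^esub>} \<times> carrier G2))"
    if "group G1" "group G2" "\<phi> \<in> hom (G1 \<times>\<times> G2) \<Gamma>"
      and "finite (rcosets\<^bsub>\<Gamma>\<^esub> (\<phi> ` carrier (G1 \<times>\<times> G2)))"
    for G1 :: "'b monoid" and G2 :: "'c monoid" and \<phi>
    using p.DirProd_hom_factor_trivial_if_acentral_kernel[OF _ kernel_infinite _ that] assms(7,8,13,14)
    by (metis finite.emptyI finite_insert)
  ultimately show ?thesis
    unfolding not_presentable_by_product_def by blast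
qed

end
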